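(* Let $q\in L_1[0,\pi]$ with $C_0=0$ and suppose $q\in E$, i.e. $C_n=O(1/n)$ as $n\to\infty$. Then $S_j(n,q)=O(1/n)$ as $n\to\infty$ for $j=2,3,4$, where \[ S_2(n,q)=\sum_{\substack{k,l\in\mathbb{Z}\\k,\,k+l\neq0,-2n}}\frac{C_kC_lC_{-k-l}}{(2n+k)(k+l)},\quad S_3(n,q)=\sum_{\substack{k,l\in\mathbb{Z}\\k,\,k+l\neq0,-2n}}\frac{C_kC_lC_{-k-l}}{k(2n+k+l)},\quad S_4(n,q)=\sum_{\substack{k,l\in\mathbb{Z}\\k,\,k+l\neq0,-2n}}\frac{C_kC_lC_{-k-l}}{(2n+k)(2n+k+l)}. \]
   Context: $q$ is a complex-valued summable function on $[0,\pi]$; $C_k=\frac{1}{\pi}\int_0^\pi q(x)\cos kx\,dx$ for $k\in\mathbb{Z}$ (so $C_{-k}=C_k$), and it is assumed that $C_0=0$. $E$ is the set of such $q$ with $C_n=O(1/n)$. $n$ is a positive integer. *)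

theory Defs
  imports "HOL-Analysis.Analysis" "HOL-Library.Landau_Symbols"
begin

definition cosC :: "(real \<Rightarrow> complex) \<Rightarrow> int \<Rightarrow> complex" where
  "cosC q k = complex_of_real (1 / pi) *
     integral {0..pi} (\<lambda>x. q x * complex_of_real (cos (real_of_int k * x)))"

definition Sidx :: "nat \<Rightarrow> (int \<times> int) set" where
  "Sidx n = {(k, l). k \<noteq> 0 \<and> k \<noteq> - 2 * int n \<and> k + l \<noteq> 0 \<and> k + l \<noteq> - 2 * int n}"

definition S2_term :: "(real \<Rightarrow> complex) \<Rightarrow> nat \<Rightarrow> int \<times> int \<Rightarrow> complex" where
  "S2_term q n = (\<lambda>(k, l). cosC q k * cosC q l * cosC q (- k - l) /
      (of_int (2 * int n + k) * of_int (k + l)))"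

definition S3_term :: "(real \<Rightarrow> complex) \<Rightarrow> nat \<Rightarrow> int \<times> int \<Rightarrow> complex" where
  "S3_term q n = (\<lambda>(k, l). cosC q k * cosC q l * cosC q (- k - l) /
      (of_int k * of_int (2 * int n + k + l)))"

definition S4_term :: "(real \<Rightarrow> complex) \<Rightarrow> nat \<Rightarrow> int \<times> int \<Rightarrow> complex" where
  "S4_term q n = (\<lambda>(k, l). cosC q k * cosC q l * cosC q (- k - l) /
      (of_int (2 * int n + k) * of_int (2 * int n + k + l)))"

definition S2 :: "(real \<Rightarrow> complex) \<Rightarrow> nat \<Rightarrow> complex" where
  "S2 q n = infsum (S2_term q n) (Sidx n)"
definition S3 :: "(real \<Rightarrow> complex) \<Rightarrow> nat \<Rightarrow> complex" where
  "S3 q n = infsum (S3_term q n) (Sidx n)"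
definition S4 :: "(real \<Rightarrow> complex) \<Rightarrow> nat \<Rightarrow> complex" where
  "S4 q n = infsum (S4_term q n) (Sidx n)"

end

theory Submission
  imports Defs
begin

text \<open>With \<open>\<bar>C\<^sub>k\<bar> \<le> M / \<bar>k\<bar>\<close>, every summand is bounded by \<open>M\<^sup>3\<close> times a product of five reciprocals
  of the integers \<open>k, l, k + l, 2n + k, 2n + k + l\<close>. The partial fraction inequality
  \<open>1 / (\<bar>k\<bar> \<bar>2n + k\<bar>) \<le> (1 / \<bar>k\<bar> + 1 / \<bar>2n + k\<bar>) / 2n\<close> extracts the factor \<open>1 / n\<close>, and the
  arithmetic-geometric mean inequality turns the rest into a sum of terms \<open>1 / (a\<^sup>2 b\<^sup>2)\<close>, where
  \<open>(a, b)\<close> is the image of \<open>(k, l)\<close> under an affine bijection of \<open>\<int>\<^sup>2\<close>. Each such sum equals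
  \<open>(\<Sum>\<^sub>a 1 / a\<^sup>2)\<^sup>2\<close>, independently of \<open>n\<close>.\<close>

text \<open>Note \<open>inv_abs 0 = 0\<close>, in line with both \<open>z / 0 = 0\<close> and \<open>C\<^sub>0 = 0\<close>: the bounds below hold
  on all of \<open>\<int>\<^sup>2\<close>, and the index set \<open>Sidx n\<close> only enters as a subset.\<close>
definition inv_abs :: "int \<Rightarrow> real" where
  "inv_abs a = inverse \<bar>real_of_int a\<bar>"

definition inv_sq_prod :: "int \<times> int \<Rightarrow> real" where
  "inv_sq_prod = (\<lambda>(a, b). inv_abs a ^ 2 * inv_abs b ^ 2)"

lemma inv_abs_nonneg [simp]: "0 \<le> inv_abs a"
  by (simp add: inv_abs_def)

lemma inv_abs_uminus [simp]: "inv_abs (- a) = inv_abs a"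
  by (simp add: inv_abs_def)

lemma inv_abs_diff_minus: "inv_abs (- k - l) = inv_abs (k + l)"
  by (metis inv_abs_uminus minus_add_distrib diff_conv_add_uminus)

lemma norm_divide_of_int_mult:
  "norm (z / (of_int a * of_int b :: complex)) = norm z * inv_abs a * inv_abs b"
  by (simp add: inv_abs_def norm_divide norm_mult divide_inverse norm_inverse flip: of_int_abs)

lemma inv_abs_mult_shift_le:
  assumes "N > 0"
  shows "inv_abs k * inv_abs (N + k) \<le> (inv_abs k + inv_abs (N + k)) / real_of_int N"
proof (cases "k = 0 \<or> N + k = 0")
  case True
  then have zero: "inv_abs k * inv_abs (N + k) = 0"
    by (auto simp: inv_abs_def)
  show ?thesis
    unfolding zero using assms by simp
next
  case False
  have "real_of_int N \<le> \<bar>real_of_int (N + k)\<bar> + \<bar>real_of_int k\<bar>"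
    using assms by linarith
  then have "inv_abs k * inv_abs (N + k) * real_of_int N
      \<le> inv_abs k * inv_abs (N + k) * (\<bar>real_of_int (N + k)\<bar> + \<bar>real_of_int k\<bar>)"
    by (intro mult_left_mono) auto
  also have "\<dots> = inv_abs k + inv_abs (N + k)"
    using False by (simp add: inv_abs_def field_simps)
  finally show ?thesis
    using assms by (simp add: field_simps)
qed

lemma add_mult_le_sum_squares:
  fixes a b c :: real
  shows "(a + b) * c \<le> a\<^sup>2 + b\<^sup>2 + c\<^sup>2"
  unfolding distrib_right
  using sum_squares_bound[of a c] sum_squares_bound[of b c] zero_le_power2[of a] zero_le_power2[of b]
  by linarith

lemma inv_abs_mult_shift_mult_le:
  assumes "N > 0" "0 \<le> r" "0 \<le> s"
  shows "inv_abs k * inv_abs (N + k) * r * s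
    \<le> (inv_abs k ^ 2 + inv_abs (N + k) ^ 2 + r ^ 2) * s / real_of_int N"
proof -
  have "inv_abs k * inv_abs (N + k) * r * s \<le> (inv_abs k + inv_abs (N + k)) / real_of_int N * r * s"
    using assms inv_abs_mult_shift_le[OF assms(1), of k] by (intro mult_right_mono) auto
  also have "\<dots> = (inv_abs k + inv_abs (N + k)) * r * s / real_of_int N"
    by simp
  also have "\<dots> \<le> (inv_abs k ^ 2 + inv_abs (N + k) ^ 2 + r ^ 2) * s / real_of_int N"
    using assms add_mult_le_sum_squares by (intro divide_right_mono mult_right_mono) auto
  finally show ?thesis .
qed

lemma inv_abs_sq_summable: "(\<lambda>a. inv_abs a ^ 2) summable_on UNIV"
proof -
  have nat: "(\<lambda>n::nat. inverse (real n ^ 2)) summable_on UNIV"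
    by (subst summable_on_UNIV_nonneg_real_iff) (auto intro: inverse_power_summable)
  have "(\<lambda>a. inv_abs a ^ 2) summable_on range int"
    by (subst summable_on_reindex) (use nat in \<open>simp_all add: o_def inv_abs_def power_inverse\<close>)
  moreover have "(\<lambda>a. inv_abs a ^ 2) summable_on range (\<lambda>n. - int n)"
    by (subst summable_on_reindex)
      (use nat in \<open>simp_all add: o_def inv_abs_def power_inverse inj_on_def\<close>)
  ultimately have "(\<lambda>a. inv_abs a ^ 2) summable_on range int \<union> range (\<lambda>n. - int n)"
    by (rule summable_on_union)
  moreover have "x \<in> range int \<union> range (\<lambda>n. - int n)" for x :: int
    by (cases x rule: int_cases2) auto
  ultimately show ?thesis
    by (metis UNIV_eq_I)
qed

lemma inv_sq_prod_summable: "inv_sq_prod summable_on UNIV"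
proof -
  define S where "S = infsum (\<lambda>b. inv_abs b ^ 2) UNIV"
  have "inv_sq_prod summable_on Sigma UNIV (\<lambda>_. UNIV)"
  proof (rule summable_on_SigmaI[where g = "\<lambda>a. inv_abs a ^ 2 * S"])
    show "((\<lambda>b. inv_sq_prod (a, b)) has_sum inv_abs a ^ 2 * S) UNIV" for a
      unfolding inv_sq_prod_def S_def
      using has_sum_cmult_right[OF has_sum_infsum[OF inv_abs_sq_summable]] by simp
    show "(\<lambda>a. inv_abs a ^ 2 * S) summable_on UNIV"
      using summable_on_cmult_left[OF inv_abs_sq_summable] .
  qed (simp add: inv_sq_prod_def)
  then show ?thesis
    by simp
qed

lemma has_sum_inv_sq_prod_bij:
  assumes "bij \<phi>"
  shows "((\<lambda>p. inv_sq_prod (\<phi> p)) has_sum infsum inv_sq_prod UNIV) UNIV"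
  by (subst has_sum_reindex_bij_betw[OF assms]) (rule has_sum_infsum[OF inv_sq_prod_summable])

lemma has_sum_sum_list_inv_sq_prod:
  assumes "\<forall>\<phi>\<in>set \<Phi>. bij \<phi>"
  shows "((\<lambda>p. \<Sum>\<phi>\<leftarrow>\<Phi>. inv_sq_prod (\<phi> p)) has_sum (length \<Phi> * infsum inv_sq_prod UNIV)) UNIV"
  using assms
proof (induction \<Phi>)
  case Nil
  then show ?case
    by simp
next
  case (Cons \<phi> \<Phi>)
  then show ?case
    using has_sum_add[OF has_sum_inv_sq_prod_bij Cons.IH] by (simp add: algebra_simps)
qed

lemma summable_norm_infsum_le_inv_sq_prod:
  fixes f :: "int \<times> int \<Rightarrow> 'a::banach"
  assumes bij: "\<forall>\<phi>\<in>set \<Phi>. bij \<phi>"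
    and bound: "\<And>p. norm (f p) \<le> c * (\<Sum>\<phi>\<leftarrow>\<Phi>. inv_sq_prod (\<phi> p))"
  shows "f summable_on A \<and> norm (infsum f A) \<le> c * (length \<Phi> * infsum inv_sq_prod UNIV)"
proof -
  define G where "G p = c * (\<Sum>\<phi>\<leftarrow>\<Phi>. inv_sq_prod (\<phi> p))" for p
  have G: "(G has_sum c * (length \<Phi> * infsum inv_sq_prod UNIV)) UNIV"
    unfolding G_def by (rule has_sum_cmult_right[OF has_sum_sum_list_inv_sq_prod[OF bij]])
  have G_nonneg: "0 \<le> G p" for p
    using bound[of p] norm_ge_zero[of "f p"] unfolding G_def by linarith
  have "G summable_on A"
    using summable_on_subset_banach[OF has_sum_imp_summable[OF G]] by simp
  then have norm_f: "(\<lambda>p. norm (f p)) summable_on A"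
    by (rule summable_on_comparison_test) (auto simp: G_def bound)
  have "norm (infsum f A) \<le> infsum (\<lambda>p. norm (f p)) A"
    by (rule norm_infsum_bound[OF norm_f])
  also have "\<dots> \<le> infsum G UNIV"
    by (rule infsum_mono_neutral[OF norm_f])
      (use G G_nonneg bound has_sum_imp_summable in \<open>auto simp: G_def\<close>)
  also have "\<dots> = c * (length \<Phi> * infsum inv_sq_prod UNIV)"
    using G by (rule infsumI)
  finally show ?thesis
    using abs_summable_summable[OF norm_f] by simp
qed

lemma bigo_inverse_imp_norm_le:
  fixes f :: "nat \<Rightarrow> 'a::real_normed_vector"
  assumes bigo: "(\<lambda>n. norm (f n)) \<in> O(\<lambda>n. 1 / real n)" and zero: "f 0 = 0"
  shows "\<exists>M\<ge>0. \<forall>n. norm (f n) \<le> M / real n"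
proof -
  obtain c where c: "c > 0" and "eventually (\<lambda>n. norm (f n) \<le> c / real n) at_top"
    using landau_o.bigE[OF bigo] by auto
  then obtain N where tail: "\<And>n. n \<ge> N \<Longrightarrow> norm (f n) \<le> c / real n"
    by (auto simp: eventually_at_top_linorder)
  define M where "M = c + (\<Sum>n<N. norm (f n) * real n)"
  have head: "(\<Sum>n<N. norm (f n) * real n) \<ge> 0"
    by (intro sum_nonneg) auto
  then have "c \<le> M"
    by (simp add: M_def)
  have "norm (f n) \<le> M / real n" for n
  proof (cases "n = 0 \<or> n \<ge> N")
    case True
    then show ?thesis
      using zero tail[of n] divide_right_mono[OF \<open>c \<le> M\<close>, of "real n"] by auto
  next
    case False
    have "norm (f n) * real n \<le> (\<Sum>n<N. norm (f n) * real n)"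
      using False by (intro member_le_sum) auto
    also have "\<dots> \<le> M"
      using c by (simp add: M_def)
    finally show ?thesis
      using False by (simp add: field_simps)
  qed
  then show ?thesis
    using c head by (auto simp: M_def intro!: exI[of _ M])
qed

lemma cosC_uminus: "cosC q (- k) = cosC q k"
  by (simp add: cosC_def)

lemma norm_cosC_le:
  assumes "cosC q 0 = 0" and "(\<lambda>n::nat. norm (cosC q (int n))) \<in> O(\<lambda>n. 1 / real n)"
  obtains M where "0 \<le> M" "\<And>k. norm (cosC q k) \<le> M * inv_abs k"
proof -
  obtain M where "0 \<le> M" and M: "\<And>n. norm (cosC q (int n)) \<le> M / real n"
    using bigo_inverse_imp_norm_le[of "\<lambda>n. cosC q (int n)"] assms by auto
  moreover have "norm (cosC q k) \<le> M * inv_abs k" for k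
    by (cases k rule: int_cases2) (use M in \<open>auto simp: cosC_uminus inv_abs_def divide_inverse\<close>)
  ultimately show ?thesis
    using that by blast
qed

lemma norm_cosC_triple_le:
  assumes "\<And>k. norm (cosC q k) \<le> M * inv_abs k"
  shows "norm (cosC q k * cosC q l * cosC q (- k - l))
    \<le> M ^ 3 * (inv_abs k * inv_abs l * inv_abs (k + l))"
proof -
  have nonneg: "0 \<le> M * inv_abs j" for j
    using assms[of j] norm_ge_zero order.trans by blast
  have "norm (cosC q k * cosC q l * cosC q (- k - l))
      \<le> (M * inv_abs k) * (M * inv_abs l) * (M * inv_abs (k + l))"
    unfolding norm_mult using assms[of k] assms[of l] assms[of "- k - l"] nonneg
    by (intro mult_mono) (auto simp: inv_abs_diff_minus)
  then show ?thesis
    by (simp add: power3_eq_cube ac_simps)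
qed

lemma bij_shear: "bij (\<lambda>(k::int, l). (a + k, b + k + l))"
  by (rule o_bij[where g = "\<lambda>(x, y). (x - a, y - x + a - b)"]) (auto simp: fun_eq_iff)

lemma bij_swap_shear: "bij (\<lambda>(k::int, l). (l, b + k + l))"
  by (rule o_bij[where g = "\<lambda>(x, y). (y - x - b, x)"]) (auto simp: fun_eq_iff)

lemma norm_S2_term_le:
  assumes "0 \<le> M" "\<And>k. norm (cosC q k) \<le> M * inv_abs k" "n > 0"
  shows "norm (S2_term q n p) \<le> M ^ 3 / real (2 * n) *
    (\<Sum>\<phi>\<leftarrow>[\<lambda>(k, l). (k, k + l), \<lambda>(k, l). (2 * int n + k, k + l), \<lambda>(k, l). (l, k + l)].
      inv_sq_prod (\<phi> p))"
proof -
  obtain k l where p: "p = (k, l)"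
    by fastforce
  have "norm (S2_term q n p)
      = norm (cosC q k * cosC q l * cosC q (- k - l)) * inv_abs (2 * int n + k) * inv_abs (k + l)"
    by (simp only: p S2_term_def prod.case norm_divide_of_int_mult)
  also have "\<dots> \<le> M ^ 3 * (inv_abs k * inv_abs l * inv_abs (k + l))
      * inv_abs (2 * int n + k) * inv_abs (k + l)"
    using norm_cosC_triple_le[OF assms(2)] by (intro mult_right_mono) auto
  also have "\<dots> = M ^ 3 * (inv_abs k * inv_abs (2 * int n + k) * inv_abs l * inv_abs (k + l) ^ 2)"
    by (simp add: power2_eq_square ac_simps)
  also have "\<dots> \<le> M ^ 3 * ((inv_abs k ^ 2 + inv_abs (2 * int n + k) ^ 2 + inv_abs l ^ 2)
      * inv_abs (k + l) ^ 2 / real_of_int (2 * int n))"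
    using assms by (intro mult_left_mono inv_abs_mult_shift_mult_le) auto
  also have "\<dots> = M ^ 3 / real (2 * n) *
    (\<Sum>\<phi>\<leftarrow>[\<lambda>(k, l). (k, k + l), \<lambda>(k, l). (2 * int n + k, k + l), \<lambda>(k, l). (l, k + l)].
      inv_sq_prod (\<phi> p))"
    by (simp add: p inv_sq_prod_def algebra_simps add_divide_distrib)
  finally show ?thesis .
qed

lemma norm_S3_term_le:
  assumes "0 \<le> M" "\<And>k. norm (cosC q k) \<le> M * inv_abs k" "n > 0"
  shows "norm (S3_term q n p) \<le> M ^ 3 / real (2 * n) *
    (\<Sum>\<phi>\<leftarrow>[\<lambda>(k, l). (k, k + l), \<lambda>(k, l). (k, 2 * int n + k + l), \<lambda>(k, l). (k, l)].
      inv_sq_prod (\<phi> p))"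
proof -
  obtain k l where p: "p = (k, l)"
    by fastforce
  have "norm (S3_term q n p)
      = norm (cosC q k * cosC q l * cosC q (- k - l)) * inv_abs k * inv_abs (2 * int n + (k + l))"
    unfolding p S3_term_def prod.case norm_divide_of_int_mult by (simp add: add.assoc)
  also have "\<dots> \<le> M ^ 3 * (inv_abs k * inv_abs l * inv_abs (k + l))
      * inv_abs k * inv_abs (2 * int n + (k + l))"
    using norm_cosC_triple_le[OF assms(2)] by (intro mult_right_mono) auto
  also have "\<dots> = M ^ 3 * (inv_abs (k + l) * inv_abs (2 * int n + (k + l)) * inv_abs l * inv_abs k ^ 2)"
    by (simp add: power2_eq_square ac_simps)
  also have "\<dots> \<le> M ^ 3 * ((inv_abs (k + l) ^ 2 + inv_abs (2 * int n + (k + l)) ^ 2 + inv_abs l ^ 2)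
      * inv_abs k ^ 2 / real_of_int (2 * int n))"
    using assms by (intro mult_left_mono inv_abs_mult_shift_mult_le) auto
  also have "\<dots> = M ^ 3 / real (2 * n) *
    (\<Sum>\<phi>\<leftarrow>[\<lambda>(k, l). (k, k + l), \<lambda>(k, l). (k, 2 * int n + k + l), \<lambda>(k, l). (k, l)].
      inv_sq_prod (\<phi> p))"
    by (simp add: p inv_sq_prod_def algebra_simps add_divide_distrib)
  finally show ?thesis .
qed

lemma norm_S4_term_le:
  assumes "0 \<le> M" "\<And>k. norm (cosC q k) \<le> M * inv_abs k" "n > 0"
  shows "norm (S4_term q n p) \<le> M ^ 3 / real (2 * n) *
    (\<Sum>\<phi>\<leftarrow>[\<lambda>(k, l). (k, k + l), \<lambda>(k, l). (2 * int n + k, k + l), \<lambda>(k, l). (l, k + l),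
        \<lambda>(k, l). (k, 2 * int n + k + l), \<lambda>(k, l). (2 * int n + k, 2 * int n + k + l),
        \<lambda>(k, l). (l, 2 * int n + k + l)].
      inv_sq_prod (\<phi> p))"
proof -
  obtain k l where p: "p = (k, l)"
    by fastforce
  define z v where "z = inv_abs (k + l)" and "v = inv_abs (2 * int n + (k + l))"
  have "0 \<le> z * v"
    by (simp add: z_def v_def)
  then have zv: "z * v \<le> z ^ 2 + v ^ 2"
    using sum_squares_bound[of z v] by linarith
  have "norm (S4_term q n p)
      = norm (cosC q k * cosC q l * cosC q (- k - l)) * inv_abs (2 * int n + k) * v"
    unfolding p v_def S4_term_def prod.case norm_divide_of_int_mult by (simp add: add.assoc)
  also have "\<dots> \<le> M ^ 3 * (inv_abs k * inv_abs l * z) * inv_abs (2 * int n + k) * v"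
    using norm_cosC_triple_le[OF assms(2)] by (intro mult_right_mono) (auto simp: z_def v_def)
  also have "\<dots> = M ^ 3 * (inv_abs k * inv_abs (2 * int n + k) * inv_abs l * (z * v))"
    by (simp add: ac_simps)
  also have "\<dots> \<le> M ^ 3 * ((inv_abs k ^ 2 + inv_abs (2 * int n + k) ^ 2 + inv_abs l ^ 2)
      * (z * v) / real_of_int (2 * int n))"
    using assms by (intro mult_left_mono inv_abs_mult_shift_mult_le) (auto simp: z_def v_def)
  also have "\<dots> \<le> M ^ 3 * ((inv_abs k ^ 2 + inv_abs (2 * int n + k) ^ 2 + inv_abs l ^ 2)
      * (z ^ 2 + v ^ 2) / real_of_int (2 * int n))"
    using assms zv by (intro mult_left_mono divide_right_mono) auto
  also have "\<dots> = M ^ 3 / real (2 * n) *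
    (\<Sum>\<phi>\<leftarrow>[\<lambda>(k, l). (k, k + l), \<lambda>(k, l). (2 * int n + k, k + l), \<lambda>(k, l). (l, k + l),
        \<lambda>(k, l). (k, 2 * int n + k + l), \<lambda>(k, l). (2 * int n + k, 2 * int n + k + l),
        \<lambda>(k, l). (l, 2 * int n + k + l)].
      inv_sq_prod (\<phi> p))"
    by (simp add: p z_def v_def inv_sq_prod_def algebra_simps add_divide_distrib)
  finally show ?thesis .
qed

lemma S2_summable_norm_le:
  assumes "0 \<le> M" "\<And>k. norm (cosC q k) \<le> M * inv_abs k" "n > 0"
  shows "S2_term q n summable_on Sidx n
    \<and> norm (S2 q n) \<le> 3 / 2 * M ^ 3 * infsum inv_sq_prod UNIV / real n"
  using summable_norm_infsum_le_inv_sq_prod[OF _ norm_S2_term_le[OF assms], of "Sidx n"]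
    bij_shear[of 0 0] bij_shear[of "2 * int n" 0] bij_swap_shear[of 0]
  by (simp add: S2_def field_simps)

lemma S3_summable_norm_le:
  assumes "0 \<le> M" "\<And>k. norm (cosC q k) \<le> M * inv_abs k" "n > 0"
  shows "S3_term q n summable_on Sidx n
    \<and> norm (S3 q n) \<le> 3 / 2 * M ^ 3 * infsum inv_sq_prod UNIV / real n"
  using summable_norm_infsum_le_inv_sq_prod[OF _ norm_S3_term_le[OF assms], of "Sidx n"]
    bij_shear[of 0 0] bij_shear[of 0 "2 * int n"]
  by (simp add: S3_def field_simps)

lemma S4_summable_norm_le:
  assumes "0 \<le> M" "\<And>k. norm (cosC q k) \<le> M * inv_abs k" "n > 0"
  shows "S4_term q n summable_on Sidx n
    \<and> norm (S4 q n) \<le> 3 * M ^ 3 * infsum inv_sq_prod UNIV / real n"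
  using summable_norm_infsum_le_inv_sq_prod[OF _ norm_S4_term_le[OF assms], of "Sidx n"]
    bij_shear[of 0 0] bij_shear[of "2 * int n" 0] bij_swap_shear[of 0]
      bij_shear[of 0 "2 * int n"] bij_shear[of "2 * int n" "2 * int n"] bij_swap_shear[of "2 * int n"]
  by (simp add: S4_def field_simps)

lemma bigo_inverse_of_norm_le:
  assumes "\<And>n. n > 0 \<Longrightarrow> norm (f n) \<le> K / real n"
  shows "(\<lambda>n. norm (f n)) \<in> O(\<lambda>n. 1 / real n)"
proof (rule bigoI[where c = K])
  show "eventually (\<lambda>n. norm (norm (f n)) \<le> K * norm (1 / real n)) at_top"
    using eventually_gt_at_top[of "0::nat"] by eventually_elim (use assms in auto)
qed

theorem lemma3:
  fixes q :: "real \<Rightarrow> complex"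
  assumes q_L1: "q absolutely_integrable_on {0..pi}"
    and C0: "cosC q 0 = 0"
    and qE: "(\<lambda>n::nat. norm (cosC q (int n))) \<in> O(\<lambda>n. 1 / real n)"
  shows "(\<forall>n>0. S2_term q n summable_on Sidx n \<and> S3_term q n summable_on Sidx n
                \<and> S4_term q n summable_on Sidx n)
         \<and> (\<lambda>n. norm (S2 q n)) \<in> O(\<lambda>n. 1 / real n)
         \<and> (\<lambda>n. norm (S3 q n)) \<in> O(\<lambda>n. 1 / real n)
         \<and> (\<lambda>n. norm (S4 q n)) \<in> O(\<lambda>n. 1 / real n)"
proof -
  obtain M where M: "0 \<le> M" "\<And>k. norm (cosC q k) \<le> M * inv_abs k"
    using norm_cosC_le[OF C0 qE] by blast
  note S2 = S2_summable_norm_le[OF M] and S3 = S3_summable_norm_le[OF M]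
    and S4 = S4_summable_norm_le[OF M]
  have "(\<lambda>n. norm (S2 q n)) \<in> O(\<lambda>n. 1 / real n)"
    by (rule bigo_inverse_of_norm_le) (use S2 in blast)
  moreover have "(\<lambda>n. norm (S3 q n)) \<in> O(\<lambda>n. 1 / real n)"
    by (rule bigo_inverse_of_norm_le) (use S3 in blast)
  moreover have "(\<lambda>n. norm (S4 q n)) \<in> O(\<lambda>n. 1 / real n)"
    by (rule bigo_inverse_of_norm_le) (use S4 in blast)
  ultimately show ?thesis
    using S2 S3 S4 by blast
qed

end
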